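(* Let $X$ and $Y$ be discrete random variables taking values in a finite set $\mathcal{A}$ with $|\mathcal{A}| = M \ge 2$, and suppose $d_{\mathrm{TV}}(X,Y) > 0$. Define $$\alpha \triangleq \frac{d_{\mathrm{loc}}(X,Y)}{d_{\mathrm{TV}}(X,Y)}$$ (so that $\alpha \in [\tfrac{2}{M}, 1]$). Then $$|H(X)-H(Y)| \le d_{\mathrm{TV}}(X,Y)\,\log(M\alpha - 1) + h\bigl(d_{\mathrm{TV}}(X,Y)\bigr).$$ Furthermore, if the probability mass functions satisfy $P_Y(a) \ge \tfrac12 P_X(a)$ and $P_X(a) \ge \tfrac12 P_Y(a)$ for every $a \in \mathcal{A}$ (i.e., $P_X$ and $P_Y$ have the same support and $\tfrac12 \le P_X(a)/P_Y(a) \le 2$ on it), then the bound tightens to $$|H(X)-H(Y)| \le d_{\mathrm{TV}}(X,Y)\,\log\Bigl(\frac{M\alpha - 1}{4}\Bigr) + h\bigl(d_{\mathrm{TV}}(X,Y)\bigr).$$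
   Context: For discrete random variables $X,Y$ on a set $\mathcal{A}$ with probability mass functions $P_X,P_Y$, the local distance is $d_{\mathrm{loc}}(X,Y) = \sup_{u\in\mathcal{A}} |P_X(u)-P_Y(u)|$ and the total variation distance is $d_{\mathrm{TV}}(X,Y) = \frac12\sum_{u\in\mathcal{A}}|P_X(u)-P_Y(u)|$. All logarithms are natural and entropies are in nats: $H(X) = -\sum_u P_X(u)\log P_X(u)$ with $0\log 0 = 0$. $h(x) = -x\log x-(1-x)\log(1-x)$ denotes the binary entropy function on $[0,1]$. *)

theory Defs
  imports Complex_Main
begin

definition is_pmf_on :: "'a set \<Rightarrow> ('a \<Rightarrow> real) \<Rightarrow> bool" where
  "is_pmf_on A P \<longleftrightarrow> (\<forall>u\<in>A. P u \<ge> 0) \<and> (\<Sum>u\<in>A. P u) = 1"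

definition d_loc :: "'a set \<Rightarrow> ('a \<Rightarrow> real) \<Rightarrow> ('a \<Rightarrow> real) \<Rightarrow> real" where
  "d_loc A P Q = (SUP u\<in>A. \<bar>P u - Q u\<bar>)"

definition d_TV :: "'a set \<Rightarrow> ('a \<Rightarrow> real) \<Rightarrow> ('a \<Rightarrow> real) \<Rightarrow> real" where
  "d_TV A P Q = (1/2) * (\<Sum>u\<in>A. \<bar>P u - Q u\<bar>)"

text \<open>Entropy in nats; note ln 0 = 0 in Isabelle, so 0 log 0 = 0.\<close>
definition entropy :: "'a set \<Rightarrow> ('a \<Rightarrow> real) \<Rightarrow> real" where
  "entropy A P = - (\<Sum>u\<in>A. P u * ln (P u))"

definition bin_entropy :: "real \<Rightarrow> real" where
  "bin_entropy x = - x * ln x - (1 - x) * ln (1 - x)"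

end

theory Submission
  imports Defs "HOL-Analysis.Convex"
begin

(* Split A into the k points where P exceeds Q and the points where Q exceeds P; on each part the
   differences |P - Q| add up to d = d_TV.  On the first part, superadditivity of x ln x bounds the
   entropy change by the entropy of the differences, at most d ln k - d ln d (and by 2 d ln 2 less
   when P <= 2 Q).  On the second part, the log-sum inequality with weights 1 - d and d bounds it by
   d ln alpha - (1 - d) ln (1 - d), as every difference is at most d_loc = alpha d.  The same bound
   on the differences shows that the second part has at least 1/alpha points, so k alpha <= M alpha - 1. *)

lemma ln_one_plus_ge_mult_ln2:
  fixes t :: real
  assumes "0 \<le> t" "t \<le> 1"
  shows "t * ln 2 \<le> ln (1 + t)"
proof -
  have "(1 - t) * ln 1 + t * ln 2 \<le> ln ((1 - t) *\<^sub>R 1 + t *\<^sub>R (2::real))"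
    by (rule concave_onD[OF ln_concave]) (use assms in auto)
  then show ?thesis by (simp add: add.commute)
qed

lemma xlnx_superadditive:
  fixes x y :: real
  assumes "0 \<le> x" "0 \<le> y"
  shows "x * ln x + y * ln y \<le> (x + y) * ln (x + y)"
proof -
  have "z * ln z \<le> z * ln (x + y)" if "0 \<le> z" "z \<le> x + y" for z
    using that by (cases "z = 0") (auto intro: mult_left_mono)
  from this[of x] this[of y] show ?thesis
    using assms by (simp add: distrib_right)
qed

lemma xlnx_superadditive_balanced:
  fixes x y :: real
  assumes "0 < y" "y \<le> x"
  shows "x * ln x + y * ln y + 2 * ln 2 * y \<le> (x + y) * ln (x + y)"
proof -
  have x: "0 < x" using assms by simp
  \<comment> \<open>x gains y ln 2 by concavity of ln, and y gains y ln 2 because x + y \<ge> 2 y\<close>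
  have "(y / x) * ln 2 \<le> ln (1 + y / x)"
    using assms x by (intro ln_one_plus_ge_mult_ln2) auto
  also have "ln (1 + y / x) = ln (x + y) - ln x"
    using assms x by (simp add: field_simps ln_div)
  finally have "y * ln 2 \<le> x * (ln (x + y) - ln x)"
    using x by (simp add: field_simps)
  moreover have "ln (2 * y) \<le> ln (x + y)"
    using assms by simp
  then have "y * (ln 2 + ln y) \<le> y * ln (x + y)"
    using assms by (simp add: ln_mult)
  ultimately show ?thesis by (simp add: algebra_simps)
qed

lemma xlnx_ge_tangent:
  fixes x y :: real
  assumes "0 \<le> x" "0 < y"
  shows "x * ln y + (x - y) \<le> x * ln x"
proof (cases "x = 0")
  case False
  then have x: "0 < x" using assms by simp
  have "x * ln (y / x) \<le> x * (y / x - 1)"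
    using x assms by (intro mult_left_mono ln_le_minus_one) auto
  also have "x * (y / x - 1) = y - x"
    using x by (simp add: field_simps)
  finally show ?thesis
    using x assms by (simp add: ln_div right_diff_distrib)
qed (use assms in simp)

lemma log_sum_le_card:
  fixes x :: "'i \<Rightarrow> real"
  assumes "finite S" "\<And>i. i \<in> S \<Longrightarrow> 0 \<le> x i"
  shows "(\<Sum>i\<in>S. x i) * ln ((\<Sum>i\<in>S. x i) / card S) \<le> (\<Sum>i\<in>S. x i * ln (x i))"
proof (cases "(\<Sum>i\<in>S. x i) = 0")
  case True
  then have "\<forall>i\<in>S. x i = 0" using assms sum_nonneg_eq_0_iff by blast
  then show ?thesis by (simp add: True)
next
  case False
  define y where "y = (\<Sum>i\<in>S. x i) / card S"
  have "S \<noteq> {}" using False by auto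
  then have "card S > 0" using assms(1) by (simp add: card_gt_0_iff)
  moreover have "(\<Sum>i\<in>S. x i) > 0" using False assms sum_nonneg[of S x] by force
  ultimately have y: "0 < y" and card_y: "card S * y = (\<Sum>i\<in>S. x i)"
    by (simp_all add: y_def)
  have "(\<Sum>i\<in>S. x i * ln y + (x i - y)) \<le> (\<Sum>i\<in>S. x i * ln (x i))"
    using assms y by (intro sum_mono xlnx_ge_tangent) auto
  then show ?thesis
    using card_y by (simp add: sum.distrib sum_subtractf sum_distrib_right y_def[symmetric])
qed

lemma log_sum_le_two:
  fixes x y t :: real
  assumes "0 \<le> x" "0 < y" "0 < t" "t \<le> 1" "0 < x \<Longrightarrow> t < 1"
  shows "(x + y) * ln (x + y) \<le> x * ln x - x * ln (1 - t) + y * ln (y / t)"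
proof (cases "x = 0")
  case True
  have "ln t \<le> 0" using assms by simp
  then show ?thesis
    using True assms by (simp add: ln_div algebra_simps mult_nonneg_nonpos)
next
  case False
  define s where "s = x + y"
  have t: "t < 1" and s: "0 < s" using False assms by (auto simp: s_def)
  have "x * ln ((1 - t) * s) + (x - (1 - t) * s) \<le> x * ln x"
    using assms t s by (intro xlnx_ge_tangent) auto
  moreover have "y * ln (t * s) + (y - t * s) \<le> y * ln y"
    using assms s by (intro xlnx_ge_tangent) auto
  moreover have "ln ((1 - t) * s) = ln (1 - t) + ln s" "ln (t * s) = ln t + ln s"
    using t s assms by (simp_all add: ln_mult)
  ultimately have "s * ln s \<le> x * ln x - x * ln (1 - t) + y * ln y - y * ln t"
    by (simp add: s_def algebra_simps)
  then show ?thesis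
    using assms by (simp add: s_def ln_div right_diff_distrib)
qed

definition excess_set :: "'a set \<Rightarrow> ('a \<Rightarrow> real) \<Rightarrow> ('a \<Rightarrow> real) \<Rightarrow> 'a set" where
  "excess_set A P Q = {u \<in> A. Q u < P u}"

lemma d_TV_commute: "d_TV A Q P = d_TV A P Q"
  unfolding d_TV_def by (simp add: abs_minus_commute)

lemma d_loc_commute: "d_loc A Q P = d_loc A P Q"
  unfolding d_loc_def by (simp add: abs_minus_commute)

lemma abs_diff_le_d_loc:
  assumes "finite A" "u \<in> A"
  shows "\<bar>P u - Q u\<bar> \<le> d_loc A P Q"
  unfolding d_loc_def using assms by (intro cSUP_upper) (simp_all add: bdd_above_finite)

lemma sum_split_excess:
  fixes g :: "'a \<Rightarrow> real"
  assumes "finite A" "\<And>u. u \<in> A \<Longrightarrow> P u = Q u \<Longrightarrow> g u = 0"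
  shows "(\<Sum>u\<in>A. g u) = (\<Sum>u\<in>excess_set A P Q. g u) + (\<Sum>u\<in>excess_set A Q P. g u)"
proof -
  have "(\<Sum>u\<in>A. g u) = (\<Sum>u\<in>excess_set A P Q \<union> excess_set A Q P. g u)"
    using assms by (intro sum.mono_neutral_right) (auto simp: excess_set_def not_less_iff_gr_or_eq)
  also have "\<dots> = (\<Sum>u\<in>excess_set A P Q. g u) + (\<Sum>u\<in>excess_set A Q P. g u)"
    using assms(1) by (intro sum.union_disjoint) (auto simp: excess_set_def)
  finally show ?thesis .
qed

lemma card_excess_add_le:
  assumes "finite A"
  shows "card (excess_set A P Q) + card (excess_set A Q P) \<le> card A"
proof -
  have "card (excess_set A P Q) + card (excess_set A Q P) = card (excess_set A P Q \<union> excess_set A Q P)"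
    using assms by (intro card_Un_disjoint[symmetric]) (auto simp: excess_set_def)
  also have "\<dots> \<le> card A"
    using assms by (intro card_mono) (auto simp: excess_set_def)
  finally show ?thesis .
qed

lemma sum_excess_eq_d_TV:
  assumes "finite A" "is_pmf_on A P" "is_pmf_on A Q"
  shows "(\<Sum>u\<in>excess_set A P Q. P u - Q u) = d_TV A P Q"
proof -
  have "2 * d_TV A P Q = (\<Sum>u\<in>excess_set A P Q. \<bar>P u - Q u\<bar>) + (\<Sum>u\<in>excess_set A Q P. \<bar>P u - Q u\<bar>)"
    unfolding d_TV_def by (simp add: sum_split_excess[OF assms(1)])
  also have "\<dots> = (\<Sum>u\<in>excess_set A P Q. P u - Q u) + (\<Sum>u\<in>excess_set A Q P. Q u - P u)"
    by (intro arg_cong2[where f = "(+)"] sum.cong) (auto simp: excess_set_def)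
  finally have abs_split: "2 * d_TV A P Q = \<dots>" .
  have "0 = (\<Sum>u\<in>A. P u - Q u)"
    using assms(2,3) by (simp add: is_pmf_on_def sum_subtractf)
  also have "\<dots> = (\<Sum>u\<in>excess_set A P Q. P u - Q u) + (\<Sum>u\<in>excess_set A Q P. P u - Q u)"
    by (rule sum_split_excess[OF assms(1)]) simp
  also have "(\<Sum>u\<in>excess_set A Q P. P u - Q u) = - (\<Sum>u\<in>excess_set A Q P. Q u - P u)"
    by (simp add: sum_negf[symmetric])
  finally show ?thesis using abs_split by linarith
qed

lemma sum_deficit_le:
  assumes "finite A" "is_pmf_on A P" "is_pmf_on A Q"
  shows "(\<Sum>u\<in>excess_set A Q P. P u) \<le> 1 - d_TV A P Q"
proof -
  have "(\<Sum>u\<in>excess_set A Q P. Q u) \<le> (\<Sum>u\<in>A. Q u)"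
    using assms by (intro sum_mono2) (auto simp: excess_set_def is_pmf_on_def)
  moreover have "(\<Sum>u\<in>excess_set A Q P. Q u - P u) = d_TV A P Q"
    using sum_excess_eq_d_TV[OF assms(1,3,2)] by (simp add: d_TV_commute)
  ultimately show ?thesis
    using assms(3) by (simp add: is_pmf_on_def sum_subtractf)
qed

lemma d_TV_le_card_excess_d_loc:
  assumes "finite A" "is_pmf_on A P" "is_pmf_on A Q"
  shows "d_TV A P Q \<le> card (excess_set A P Q) * d_loc A P Q"
proof -
  have "(\<Sum>u\<in>excess_set A P Q. P u - Q u) \<le> card (excess_set A P Q) * d_loc A P Q"
    using assms abs_diff_le_d_loc[OF assms(1), of _ P Q]
    by (intro sum_bounded_above) (auto simp: excess_set_def intro: abs_le_D1)
  then show ?thesis using sum_excess_eq_d_TV[OF assms] by simp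
qed

lemma entropy_diff_split:
  assumes "finite A"
  shows "entropy A P - entropy A Q
    = (\<Sum>u\<in>excess_set A P Q. Q u * ln (Q u) - P u * ln (P u))
    + (\<Sum>u\<in>excess_set A Q P. Q u * ln (Q u) - P u * ln (P u))"
proof -
  have "entropy A P - entropy A Q = (\<Sum>u\<in>A. Q u * ln (Q u) - P u * ln (P u))"
    unfolding entropy_def by (simp add: sum_subtractf)
  also have "\<dots> = (\<Sum>u\<in>excess_set A P Q. Q u * ln (Q u) - P u * ln (P u))
    + (\<Sum>u\<in>excess_set A Q P. Q u * ln (Q u) - P u * ln (P u))"
    by (rule sum_split_excess[OF assms]) simp
  finally show ?thesis .
qed

lemma sum_excess_entropy_le:
  fixes b :: real
  assumes "finite A" "is_pmf_on A P" "is_pmf_on A Q"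
    and margin: "\<And>u. u \<in> excess_set A P Q \<Longrightarrow>
      Q u * ln (Q u) + (P u - Q u) * ln (P u - Q u) + b * (P u - Q u) \<le> P u * ln (P u)"
  defines "d \<equiv> d_TV A P Q"
  shows "(\<Sum>u\<in>excess_set A P Q. Q u * ln (Q u) - P u * ln (P u))
    \<le> - d * ln (d / card (excess_set A P Q)) - b * d"
proof -
  let ?S = "excess_set A P Q"
  have sum_eq: "(\<Sum>u\<in>?S. P u - Q u) = d"
    unfolding d_def using assms(1-3) by (rule sum_excess_eq_d_TV)
  have "(\<Sum>u\<in>?S. Q u * ln (Q u) - P u * ln (P u))
      \<le> (\<Sum>u\<in>?S. - ((P u - Q u) * ln (P u - Q u)) - b * (P u - Q u))"
    using margin by (intro sum_mono) (simp add: algebra_simps)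
  also have "\<dots> = - (\<Sum>u\<in>?S. (P u - Q u) * ln (P u - Q u)) - b * d"
    using sum_eq by (simp add: sum_subtractf sum_negf sum_distrib_left[symmetric])
  also have "\<dots> \<le> - d * ln (d / card ?S) - b * d"
    using log_sum_le_card[of ?S "\<lambda>u. P u - Q u"] assms(1) sum_eq
    by (simp add: excess_set_def)
  finally show ?thesis .
qed

lemma sum_deficit_entropy_le:
  assumes "finite A" "is_pmf_on A P" "is_pmf_on A Q" "0 < d_TV A P Q"
  defines "d \<equiv> d_TV A P Q"
  shows "(\<Sum>u\<in>excess_set A Q P. Q u * ln (Q u) - P u * ln (P u))
    \<le> d * ln (d_loc A P Q / d) - (1 - d) * ln (1 - d)"
proof -
  let ?S = "excess_set A Q P"
  have d: "0 < d" using assms(4) by (simp add: d_def)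
  have deficit: "(\<Sum>u\<in>?S. P u) \<le> 1 - d"
    unfolding d_def using assms(1-3) by (rule sum_deficit_le)
  have P_nonneg: "0 \<le> P u" if "u \<in> ?S" for u
    using that assms(2) by (simp add: excess_set_def is_pmf_on_def)
  have d_le_1: "d \<le> 1"
    using deficit sum_nonneg[of ?S P] P_nonneg by simp
  have "Q u * ln (Q u) - P u * ln (P u) \<le> (Q u - P u) * ln (d_loc A P Q / d) - P u * ln (1 - d)"
    if u: "u \<in> ?S" for u
  proof -
    have lt: "P u < Q u" and uA: "u \<in> A" using u by (auto simp: excess_set_def)
    have "P u \<le> 1 - d"
      using member_le_sum[of u ?S P] P_nonneg u assms(1) deficit by (simp add: excess_set_def)
    then have "(P u + (Q u - P u)) * ln (P u + (Q u - P u))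
        \<le> P u * ln (P u) - P u * ln (1 - d) + (Q u - P u) * ln ((Q u - P u) / d)"
      using P_nonneg[OF u] lt d d_le_1 by (intro log_sum_le_two) auto
    moreover have "(Q u - P u) * ln ((Q u - P u) / d) \<le> (Q u - P u) * ln (d_loc A P Q / d)"
      using abs_diff_le_d_loc[OF assms(1) uA, of P Q] lt d
      by (intro mult_left_mono) (auto simp: divide_right_mono)
    ultimately show ?thesis by simp
  qed
  then have "(\<Sum>u\<in>?S. Q u * ln (Q u) - P u * ln (P u))
      \<le> (\<Sum>u\<in>?S. (Q u - P u) * ln (d_loc A P Q / d) - P u * ln (1 - d))"
    by (rule sum_mono)
  also have "\<dots> = d * ln (d_loc A P Q / d) - (\<Sum>u\<in>?S. P u) * ln (1 - d)"
    using sum_excess_eq_d_TV[OF assms(1,3,2)]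
    by (simp add: sum_subtractf sum_distrib_right[symmetric] d_def d_TV_commute)
  also have "\<dots> \<le> d * ln (d_loc A P Q / d) - (1 - d) * ln (1 - d)"
  proof -
    have "ln (1 - d) \<le> 0"
      using d d_le_1 by (cases "d = 1") auto
    then show ?thesis
      using deficit by (simp add: mult_right_mono_neg)
  qed
  finally show ?thesis .
qed

lemma card_excess_d_loc_add_d_TV_le:
  assumes "finite A" "is_pmf_on A P" "is_pmf_on A Q"
  shows "card (excess_set A P Q) * d_loc A P Q + d_TV A P Q \<le> card A * d_loc A P Q"
proof -
  have "d_TV A P Q \<le> card (excess_set A Q P) * d_loc A P Q"
    using d_TV_le_card_excess_d_loc[OF assms(1,3,2)] by (simp add: d_TV_commute d_loc_commute)
  moreover have "real (card (excess_set A P Q) + card (excess_set A Q P)) * d_loc A P Q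
      \<le> card A * d_loc A P Q"
  proof (rule mult_right_mono)
    obtain u where "u \<in> A"
      using assms(2) by (force simp: is_pmf_on_def)
    then show "0 \<le> d_loc A P Q"
      using abs_diff_le_d_loc[OF assms(1)] by (meson abs_ge_zero order_trans)
  qed (use card_excess_add_le[OF assms(1)] in \<open>simp only: of_nat_le_iff\<close>)
  ultimately show ?thesis by (simp add: distrib_right)
qed

lemma two_d_TV_le_card_d_loc:
  assumes "finite A" "is_pmf_on A P" "is_pmf_on A Q"
  shows "2 * d_TV A P Q \<le> card A * d_loc A P Q"
  using d_TV_le_card_excess_d_loc[OF assms] card_excess_d_loc_add_d_TV_le[OF assms] by simp

lemma entropy_diff_le:
  fixes b :: real
  assumes "finite A" "is_pmf_on A P" "is_pmf_on A Q" "0 < d_TV A P Q"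
    and margin: "\<And>u. u \<in> excess_set A P Q \<Longrightarrow>
      Q u * ln (Q u) + (P u - Q u) * ln (P u - Q u) + b * (P u - Q u) \<le> P u * ln (P u)"
  defines "d \<equiv> d_TV A P Q" and "\<alpha> \<equiv> d_loc A P Q / d_TV A P Q"
  shows "entropy A P - entropy A Q \<le> d * ln (real (card A) * \<alpha> - 1) - b * d + bin_entropy d"
proof -
  let ?k = "real (card (excess_set A P Q))"
  have d: "0 < d" using assms(4) by (simp add: d_def)
  have "0 < ?k * (\<alpha> * d)"
    using d_TV_le_card_excess_d_loc[OF assms(1-3)] d by (simp add: \<alpha>_def d_def)
  then have k: "0 < ?k" and \<alpha>: "0 < \<alpha>"
    using d by (simp_all add: zero_less_mult_iff)
  have "(?k * \<alpha> + 1) * d \<le> (real (card A) * \<alpha>) * d"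
    using card_excess_d_loc_add_d_TV_le[OF assms(1-3)] d by (simp add: \<alpha>_def d_def distrib_right)
  then have k\<alpha>_le: "?k * \<alpha> \<le> real (card A) * \<alpha> - 1"
    using d by simp
  have "entropy A P - entropy A Q \<le> (- d * ln (d / ?k) - b * d) + (d * ln \<alpha> - (1 - d) * ln (1 - d))"
    using entropy_diff_split[OF assms(1), of P Q] sum_excess_entropy_le[OF assms(1-3) margin]
      sum_deficit_entropy_le[OF assms(1-4)]
    by (simp add: d_def \<alpha>_def)
  also have "\<dots> = d * ln (?k * \<alpha>) - b * d + bin_entropy d"
    using d k \<alpha> by (simp add: ln_div ln_mult bin_entropy_def algebra_simps)
  also have "\<dots> \<le> d * ln (real (card A) * \<alpha> - 1) - b * d + bin_entropy d"
    using k\<alpha>_le k \<alpha> d by (intro add_right_mono diff_right_mono mult_left_mono ln_mono) auto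
  finally show ?thesis .
qed

lemma abs_entropy_diff_le:
  fixes b :: real
  assumes "finite A" "is_pmf_on A P" "is_pmf_on A Q" "0 < d_TV A P Q"
    and "\<And>u. u \<in> excess_set A P Q \<Longrightarrow>
      Q u * ln (Q u) + (P u - Q u) * ln (P u - Q u) + b * (P u - Q u) \<le> P u * ln (P u)"
    and "\<And>u. u \<in> excess_set A Q P \<Longrightarrow>
      P u * ln (P u) + (Q u - P u) * ln (Q u - P u) + b * (Q u - P u) \<le> Q u * ln (Q u)"
  defines "d \<equiv> d_TV A P Q" and "\<alpha> \<equiv> d_loc A P Q / d_TV A P Q"
  shows "\<bar>entropy A P - entropy A Q\<bar> \<le> d * ln (real (card A) * \<alpha> - 1) - b * d + bin_entropy d"
proof -
  have "entropy A P - entropy A Q \<le> d * ln (real (card A) * \<alpha> - 1) - b * d + bin_entropy d"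
    unfolding d_def \<alpha>_def using assms(1-5) by (rule entropy_diff_le)
  moreover have "entropy A Q - entropy A P \<le> d * ln (real (card A) * \<alpha> - 1) - b * d + bin_entropy d"
    using entropy_diff_le[OF assms(1,3,2) _ assms(6)] assms(4)
    unfolding d_def \<alpha>_def d_TV_commute[of A Q P] d_loc_commute[of A Q P] .
  ultimately show ?thesis by linarith
qed

theorem theorem4:
  fixes A :: "'a set" and P Q :: "'a \<Rightarrow> real" and M :: nat
  assumes "finite A" and "card A = M" and "M \<ge> 2"
    and "is_pmf_on A P" and "is_pmf_on A Q"
    and "d_TV A P Q > 0"
  defines "\<alpha> \<equiv> d_loc A P Q / d_TV A P Q"
  shows "\<bar>entropy A P - entropy A Q\<bar>
           \<le> d_TV A P Q * ln (real M * \<alpha> - 1) + bin_entropy (d_TV A P Q)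
       \<and> ((\<forall>a\<in>A. Q a \<ge> P a / 2 \<and> P a \<ge> Q a / 2) \<longrightarrow>
         \<bar>entropy A P - entropy A Q\<bar>
           \<le> d_TV A P Q * ln ((real M * \<alpha> - 1) / 4) + bin_entropy (d_TV A P Q))"
proof (intro conjI impI)
  note bound = abs_entropy_diff_le[OF assms(1,4,5,6), unfolded assms(2), folded \<alpha>_def]
  have superadditive:
    "R u * ln (R u) + (S u - R u) * ln (S u - R u) + 0 * (S u - R u) \<le> S u * ln (S u)"
    if "is_pmf_on A R" "u \<in> excess_set A S R" for R S :: "'a \<Rightarrow> real" and u
    using that xlnx_superadditive[of "R u" "S u - R u"]
    by (simp add: is_pmf_on_def excess_set_def)
  show "\<bar>entropy A P - entropy A Q\<bar> \<le> d_TV A P Q * ln (real M * \<alpha> - 1) + bin_entropy (d_TV A P Q)"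
    using bound[of 0] superadditive[OF assms(5)] superadditive[OF assms(4)] by simp
  assume ratio: "\<forall>a\<in>A. Q a \<ge> P a / 2 \<and> P a \<ge> Q a / 2"
  have superadditive_balanced:
    "R u * ln (R u) + (S u - R u) * ln (S u - R u) + 2 * ln 2 * (S u - R u) \<le> S u * ln (S u)"
    if "R u \<ge> S u / 2" "u \<in> excess_set A S R" for R S :: "'a \<Rightarrow> real" and u
    using that xlnx_superadditive_balanced[of "S u - R u" "R u"]
    by (simp add: excess_set_def)
  have "2 * d_TV A P Q \<le> real M * d_loc A P Q"
    using two_d_TV_le_card_d_loc[OF assms(1,4,5)] assms(2) by simp
  then have "1 < real M * \<alpha>"
    using assms(6) by (simp add: \<alpha>_def field_simps)
  then have ln_quarter: "ln ((real M * \<alpha> - 1) / 4) = ln (real M * \<alpha> - 1) - 2 * ln 2"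
    using ln_realpow[of 2 2] by (simp add: ln_div)
  have "\<bar>entropy A P - entropy A Q\<bar>
      \<le> d_TV A P Q * ln (real M * \<alpha> - 1) - 2 * ln 2 * d_TV A P Q + bin_entropy (d_TV A P Q)"
    using ratio by (intro bound superadditive_balanced) (auto simp: excess_set_def)
  then show "\<bar>entropy A P - entropy A Q\<bar>
      \<le> d_TV A P Q * ln ((real M * \<alpha> - 1) / 4) + bin_entropy (d_TV A P Q)"
    unfolding ln_quarter by (simp add: algebra_simps)
qed

end
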